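(* Let $G$ be a finite group with an abelian Sylow $p$-subgroup $P$. Then \[ \chi(\mathcal F^*_G)=\frac{|\{\varphi\in\mathcal F_G(P): C_P(\varphi)>1\}|}{|\mathcal F_G(P)|}. \]
   Context: $\mathcal F_G(P)=N_G(P)/C_G(P)$, viewed as the group of automorphisms of $P$ induced by conjugation by elements of $N_G(P)$; $C_P(\varphi)$ is the subgroup of elements of $P$ fixed by $\varphi$. $\mathcal F^*_G$ is the category whose objects are the nonidentity $p$-subgroups of $G$, with $\mathcal F^*_G(H,K)=C_G(H)\backslash N_G(H,K)$, $N_G(H,K)=\{g\in G:g^{-1}Hg\le K\}$, composition induced by multiplication. $\chi$ is Leinster's Euler characteristic: for a finite category $\mathcal C$, a weighting is $k^\bullet$ with $\sum_b|\mathcal C(a,b)|k^b=1$ for all $a$, a coweighting is $k_\bullet$ with $\sum_ak_a|\mathcal C(a,b)|=1$ for all $b$, and if both exist $\chi(\mathcal C)=\sum_bk^b=\sum_ak_a$. *)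

theory Defs
  imports Complex_Main "HOL-Algebra.Group" "HOL-Algebra.Coset" "HOL-Computational_Algebra.Primes"
begin

definition p_subgroup :: "('a, 'b) monoid_scheme \<Rightarrow> nat \<Rightarrow> 'a set \<Rightarrow> bool" where
  "p_subgroup G p H \<longleftrightarrow> subgroup H G \<and> (\<exists>n. card H = p ^ n)"

definition sylow_subgroup :: "('a, 'b) monoid_scheme \<Rightarrow> nat \<Rightarrow> 'a set \<Rightarrow> bool" where
  "sylow_subgroup G p P \<longleftrightarrow> p_subgroup G p P \<and> \<not> p dvd (order G div card P)"

definition abelian_set :: "('a, 'b) monoid_scheme \<Rightarrow> 'a set \<Rightarrow> bool" where
  "abelian_set G P \<longleftrightarrow> (\<forall>x\<in>P. \<forall>y\<in>P. x \<otimes>\<^bsub>G\<^esub> y = y \<otimes>\<^bsub>G\<^esub> x)"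

definition centralizer_of :: "('a, 'b) monoid_scheme \<Rightarrow> 'a set \<Rightarrow> 'a set" where
  "centralizer_of G H = {g \<in> carrier G. \<forall>h\<in>H. g \<otimes>\<^bsub>G\<^esub> h = h \<otimes>\<^bsub>G\<^esub> g}"

definition transporter :: "('a, 'b) monoid_scheme \<Rightarrow> 'a set \<Rightarrow> 'a set \<Rightarrow> 'a set" where
  "transporter G H K = {g \<in> carrier G. \<forall>h\<in>H. inv\<^bsub>G\<^esub> g \<otimes>\<^bsub>G\<^esub> h \<otimes>\<^bsub>G\<^esub> g \<in> K}"

definition normalizer_of :: "('a, 'b) monoid_scheme \<Rightarrow> 'a set \<Rightarrow> 'a set" where
  "normalizer_of G H = transporter G H H"

text \<open>F*_G(H,K) = C_G(H) \ N_G(H,K): orbits of left multiplication by C_G(H),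
  i.e. the right cosets C_G(H) g, g in N_G(H,K).\<close>
definition frob_hom :: "('a, 'b) monoid_scheme \<Rightarrow> 'a set \<Rightarrow> 'a set \<Rightarrow> 'a set set" where
  "frob_hom G H K = (\<lambda>g. centralizer_of G H #>\<^bsub>G\<^esub> g) ` transporter G H K"

definition frob_objs :: "('a, 'b) monoid_scheme \<Rightarrow> nat \<Rightarrow> 'a set set" where
  "frob_objs G p = {H. p_subgroup G p H \<and> H \<noteq> {\<one>\<^bsub>G\<^esub>}}"

text \<open>F_G(P) = N_G(P)/C_G(P), as the automorphisms of P induced by conjugation.\<close>
definition fusion_auts :: "('a, 'b) monoid_scheme \<Rightarrow> 'a set \<Rightarrow> ('a \<Rightarrow> 'a) set" where
  "fusion_auts G P =
     (\<lambda>g. \<lambda>x\<in>P. inv\<^bsub>G\<^esub> g \<otimes>\<^bsub>G\<^esub> x \<otimes>\<^bsub>G\<^esub> g) ` normalizer_of G P"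

definition fixed_points :: "'a set \<Rightarrow> ('a \<Rightarrow> 'a) \<Rightarrow> 'a set" where
  "fixed_points P \<phi> = {x \<in> P. \<phi> x = x}"

text \<open>A finite category is given by its (finite) object set and Hom-set cardinalities.\<close>
definition is_weighting :: "'o set \<Rightarrow> ('o \<Rightarrow> 'o \<Rightarrow> nat) \<Rightarrow> ('o \<Rightarrow> rat) \<Rightarrow> bool" where
  "is_weighting Obj Hom k \<longleftrightarrow> (\<forall>a\<in>Obj. (\<Sum>b\<in>Obj. of_nat (Hom a b) * k b) = 1)"

definition is_coweighting :: "'o set \<Rightarrow> ('o \<Rightarrow> 'o \<Rightarrow> nat) \<Rightarrow> ('o \<Rightarrow> rat) \<Rightarrow> bool" where
  "is_coweighting Obj Hom k \<longleftrightarrow> (\<forall>b\<in>Obj. (\<Sum>a\<in>Obj. k a * of_nat (Hom a b)) = 1)"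

definition has_euler_char :: "'o set \<Rightarrow> ('o \<Rightarrow> 'o \<Rightarrow> nat) \<Rightarrow> rat \<Rightarrow> bool" where
  "has_euler_char Obj Hom x \<longleftrightarrow>
     (\<exists>k. is_weighting Obj Hom k) \<and> (\<exists>k. is_coweighting Obj Hom k) \<and>
     (\<forall>k. is_weighting Obj Hom k \<longrightarrow> (\<Sum>b\<in>Obj. k b) = x) \<and>
     (\<forall>k. is_coweighting Obj Hom k \<longrightarrow> (\<Sum>a\<in>Obj. k a) = x)"

end

theory Submission
  imports Defs "HOL-Algebra.Group_Action"
begin

text \<open>Weight a nonidentity \<open>p\<close>-subgroup \<open>K\<close> by the proportion of pairs
  \<open>(g, m) \<in> G \<times> N\<^sub>G(P)\<close> with \<open>C\<^sub>P(m)\<^sup>g = K\<close>. As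
  \<open>|F*\<^sub>G(H, K)| = |N\<^sub>G(H, K)| / |C\<^sub>G(H)|\<close>, this is a weighting once the weights of the
  objects containing any object \<open>L\<close> add up to \<open>|C\<^sub>G(L)| / |G|\<close>, i.e. once the pairs with
  \<open>L \<le> C\<^sub>P(m)\<^sup>g\<close> number \<open>|N\<^sub>G(P)| |C\<^sub>G(L)|\<close>. Such \<open>g\<close> are those with
  \<open>L \<le> P\<^sup>g\<close>; since \<open>P\<close> is abelian, \<open>P\<^sup>g\<close> is then a Sylow subgroup of \<open>C\<^sub>G(L)\<close>,
  so by Sylow's theorem in \<open>C\<^sub>G(L)\<close> these \<open>g\<close> form one double coset
  \<open>N\<^sub>G(P) g\<^sub>0 C\<^sub>G(L)\<close>, and for each of them the admissible \<open>m\<close> are as many as the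
  preimages of \<open>g\<close> under \<open>(n, d) \<mapsto> n g\<^sub>0 d\<close>. A coweighting exists by Moebius
  inversion on the poset of objects. The total weight is the proportion of \<open>m \<in> N\<^sub>G(P)\<close>
  with \<open>C\<^sub>P(m) > 1\<close>, which does not change on passing to
  \<open>F\<^sub>G(P) = N\<^sub>G(P) / C\<^sub>G(P)\<close>.\<close>

section \<open>Euler characteristic of a finite category\<close>

lemma sum_weighting_eq_sum_coweighting:
  assumes "is_weighting Obj Hom k" and "is_coweighting Obj Hom c"
  shows "(\<Sum>b\<in>Obj. k b) = (\<Sum>a\<in>Obj. c a)"
proof -
  have "(\<Sum>b\<in>Obj. k b) = (\<Sum>b\<in>Obj. (\<Sum>a\<in>Obj. c a * of_nat (Hom a b)) * k b)"
    using assms(2) unfolding is_coweighting_def by simp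
  also have "\<dots> = (\<Sum>a\<in>Obj. c a * (\<Sum>b\<in>Obj. of_nat (Hom a b) * k b))"
    unfolding sum_distrib_right sum_distrib_left
    by (rule trans[OF sum.swap]) (simp add: mult.assoc)
  also have "\<dots> = (\<Sum>a\<in>Obj. c a)"
    using assms(1) unfolding is_weighting_def by simp
  finally show ?thesis .
qed

lemma has_euler_charI:
  assumes k: "is_weighting Obj Hom k" and c: "is_coweighting Obj Hom c"
    and sum_k: "(\<Sum>b\<in>Obj. k b) = x"
  shows "has_euler_char Obj Hom x"
proof -
  have "(\<Sum>b\<in>Obj. k' b) = x" if "is_weighting Obj Hom k'" for k'
    using sum_weighting_eq_sum_coweighting[OF that c] sum_weighting_eq_sum_coweighting[OF k c] sum_k
    by simp
  moreover have "(\<Sum>a\<in>Obj. c' a) = x" if "is_coweighting Obj Hom c'" for c'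
    using sum_weighting_eq_sum_coweighting[OF k that] sum_k by simp
  ultimately show ?thesis unfolding has_euler_char_def using k c by blast
qed

lemma ex_sum_subsets_eq:
  fixes f :: "'a set \<Rightarrow> 'b::ab_group_add"
  assumes "finite S" and "\<And>K. K \<in> S \<Longrightarrow> finite K"
  shows "\<exists>m. \<forall>K\<in>S. (\<Sum>H\<in>{H\<in>S. H \<subseteq> K}. m H) = f K"
  using assms
proof (induction S rule: finite_remove_induct)
  case empty
  then show ?case by simp
next
  case (remove S)
  obtain K0 where K0: "K0 \<in> S" "card K0 = Max (card ` S)"
    using remove.hyps(1,2) by (metis (mono_tags, lifting) Max_in finite_imageI image_iff image_is_empty)
  have K0_maximal: "\<not> K0 \<subseteq> K" if K: "K \<in> S" "K \<noteq> K0" for K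
  proof
    assume "K0 \<subseteq> K"
    moreover have "card K \<le> card K0" using K0 K remove.hyps(1) by simp
    ultimately have "K0 = K" using card_seteq[of K K0] remove.prems K(1) by blast
    then show False using K(2) by simp
  qed
  obtain m where m: "\<forall>K\<in>S - {K0}. (\<Sum>H\<in>{H\<in>S - {K0}. H \<subseteq> K}. m H) = f K"
    using remove.IH[OF K0(1)] remove.prems by blast
  define m' where "m' = m(K0 := f K0 - (\<Sum>H\<in>{H\<in>S - {K0}. H \<subseteq> K0}. m H))"
  have m'_eq: "(\<Sum>H\<in>{H\<in>S - {K0}. H \<subseteq> K}. m' H) = (\<Sum>H\<in>{H\<in>S - {K0}. H \<subseteq> K}. m H)" for K
    by (rule sum.cong) (auto simp: m'_def)
  show ?case
  proof (intro exI ballI)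
    fix K assume K: "K \<in> S"
    show "(\<Sum>H\<in>{H\<in>S. H \<subseteq> K}. m' H) = f K"
    proof (cases "K = K0")
      case True
      have "{H\<in>S. H \<subseteq> K0} = insert K0 {H\<in>S - {K0}. H \<subseteq> K0}" using K0 by auto
      then show ?thesis
        using True m'_eq[of K0] remove.hyps(1) by (simp add: m'_def)
    next
      case False
      then have "{H\<in>S. H \<subseteq> K} = {H\<in>S - {K0}. H \<subseteq> K}" using K0_maximal[OF K] by auto
      then show ?thesis using m'_eq[of K] m K False by simp
    qed
  qed
qed

lemma sum_card_fibres:
  assumes "finite A" and "finite B"
  shows "(\<Sum>b\<in>B. card {x\<in>A. f x = b}) = card {x\<in>A. f x \<in> B}"
proof -
  have "card (\<Union>b\<in>B. {x\<in>A. f x = b}) = (\<Sum>b\<in>B. card {x\<in>A. f x = b})"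
    by (rule card_UN_disjoint) (use assms in auto)
  moreover have "(\<Union>b\<in>B. {x\<in>A. f x = b}) = {x\<in>A. f x \<in> B}" by auto
  ultimately show ?thesis by simp
qed

lemma card_eq_mult_card_image:
  assumes "finite A" and "\<And>x. x \<in> A \<Longrightarrow> card {y\<in>A. f y = f x} = c"
  shows "card A = c * card (f ` A)"
proof -
  have "{x\<in>A. f x \<in> f ` A} = A" by blast
  then have "card A = (\<Sum>b\<in>f ` A. card {x\<in>A. f x = b})"
    using sum_card_fibres[of A "f ` A" f] assms(1) by simp
  also have "\<dots> = (\<Sum>b\<in>f ` A. c)" using assms(2) by (intro sum.cong) auto
  finally show ?thesis by simp
qed

lemma sum_card_mult_eq_sum_sum:
  fixes f :: "'b \<Rightarrow> 'c::comm_semiring_1"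
  assumes "finite A" and "finite B"
  shows "(\<Sum>b\<in>B. of_nat (card {a\<in>A. R a b}) * f b) = (\<Sum>a\<in>A. \<Sum>b\<in>{b\<in>B. R a b}. f b)"
proof -
  have card_eq: "of_nat (card {a\<in>A. R a b}) = (\<Sum>a\<in>A. if R a b then 1 else (0::'c))" for b
    using sum.inter_filter[OF assms(1), of "\<lambda>_. 1::'c" "\<lambda>a. R a b"] by simp
  have "(\<Sum>b\<in>B. of_nat (card {a\<in>A. R a b}) * f b) = (\<Sum>b\<in>B. \<Sum>a\<in>A. if R a b then f b else 0)"
    unfolding card_eq sum_distrib_right by (intro sum.cong) auto
  also have "\<dots> = (\<Sum>a\<in>A. \<Sum>b\<in>B. if R a b then f b else 0)"
    by (rule sum.swap)
  also have "\<dots> = (\<Sum>a\<in>A. \<Sum>b\<in>{b\<in>B. R a b}. f b)"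
    using assms(2) by (simp add: sum.inter_filter)
  finally show ?thesis .
qed

lemma (in group_action) ex_fixed_point_if_prime_power_order:
  assumes E: "finite E" and p: "prime p" and order: "order G = p ^ b" and "\<not> p dvd card E"
  shows "\<exists>x\<in>E. \<forall>g\<in>carrier G. \<phi> g x = x"
proof (rule ccontr)
  assume no_fixed: "\<not> ?thesis"
  have "p dvd card Orb" if Orb: "Orb \<in> orbits G E \<phi>" for Orb
  proof -
    obtain x where x: "x \<in> E" "Orb = orbit G \<phi> x" using Orb unfolding orbits_def by blast
    have "card Orb dvd p ^ b"
      using orbit_stabilizer_theorem[OF x(1)] x(2) order dvd_triv_left by metis
    then obtain i where i: "card Orb = p ^ i" using divides_primepow_nat[OF p] by blast
    have "i \<noteq> 0"
    proof
      assume "i = 0"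
      then obtain z where "Orb = {z}" using i card_1_singletonE by auto
      then have "Orb = {x}" using orbit_refl[OF x(1)] x(2) by simp
      then show False
        using no_fixed x unfolding orbit_def by blast
    qed
    then show ?thesis using i by (simp add: dvd_power)
  qed
  then have "p dvd (\<Sum>Orb\<in>orbits G E \<phi>. card Orb)" by (simp add: dvd_sum)
  moreover have "(\<Sum>Orb\<in>orbits G E \<phi>. card Orb) = card E"
    using disjoint_sum[OF E, of "\<lambda>_. 1::nat"] by simp
  ultimately show False using assms(4) by simp
qed

section \<open>Conjugation, centralizers and Sylow subgroups\<close>

definition conjugate :: "('a, 'b) monoid_scheme \<Rightarrow> 'a \<Rightarrow> 'a set \<Rightarrow> 'a set" where
  "conjugate G g X = (\<lambda>x. inv\<^bsub>G\<^esub> g \<otimes>\<^bsub>G\<^esub> x \<otimes>\<^bsub>G\<^esub> g) ` X"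

context group
begin

lemma inv_mult_cancel_left [simp]: "g \<in> carrier G \<Longrightarrow> x \<in> carrier G \<Longrightarrow> inv g \<otimes> (g \<otimes> x) = x"
  by (simp add: m_assoc[symmetric])

lemma mult_inv_cancel_left [simp]: "g \<in> carrier G \<Longrightarrow> x \<in> carrier G \<Longrightarrow> g \<otimes> (inv g \<otimes> x) = x"
  by (simp add: m_assoc[symmetric])

lemma inj_on_conjugation: "g \<in> carrier G \<Longrightarrow> inj_on (\<lambda>x. inv g \<otimes> x \<otimes> g) (carrier G)"
  by (auto simp: inj_on_def)

lemma conj_eq_self_iff_commute:
  assumes "x \<in> carrier G" and "m \<in> carrier G"
  shows "inv m \<otimes> x \<otimes> m = x \<longleftrightarrow> x \<otimes> m = m \<otimes> x"
proof
  assume "inv m \<otimes> x \<otimes> m = x"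
  then have "m \<otimes> (inv m \<otimes> x \<otimes> m) = m \<otimes> x" by simp
  then show "x \<otimes> m = m \<otimes> x" using assms by (simp add: m_assoc)
next
  assume "x \<otimes> m = m \<otimes> x"
  then have "inv m \<otimes> (x \<otimes> m) = inv m \<otimes> (m \<otimes> x)" by simp
  then show "inv m \<otimes> x \<otimes> m = x" using assms by (simp add: m_assoc)
qed

lemma conj_commute_iff:
  assumes "a \<in> carrier G" "b \<in> carrier G" "g \<in> carrier G"
  shows "a \<otimes> (inv g \<otimes> b \<otimes> g) = (inv g \<otimes> b \<otimes> g) \<otimes> a
     \<longleftrightarrow> (g \<otimes> a \<otimes> inv g) \<otimes> b = b \<otimes> (g \<otimes> a \<otimes> inv g)"
proof -
  have "a \<otimes> (inv g \<otimes> b \<otimes> g) = inv g \<otimes> ((g \<otimes> a \<otimes> inv g) \<otimes> b) \<otimes> g"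
    and "(inv g \<otimes> b \<otimes> g) \<otimes> a = inv g \<otimes> (b \<otimes> (g \<otimes> a \<otimes> inv g)) \<otimes> g"
    using assms by (simp_all add: m_assoc)
  then show ?thesis using assms by simp
qed

lemma conjugate_subset_carrier: "X \<subseteq> carrier G \<Longrightarrow> g \<in> carrier G \<Longrightarrow> conjugate G g X \<subseteq> carrier G"
  unfolding conjugate_def by auto

lemma card_conjugate: "X \<subseteq> carrier G \<Longrightarrow> g \<in> carrier G \<Longrightarrow> card (conjugate G g X) = card X"
  unfolding conjugate_def by (rule card_image, rule inj_on_subset[OF inj_on_conjugation]) auto

lemma mem_conjugate_iff:
  assumes "X \<subseteq> carrier G" and "g \<in> carrier G" and "y \<in> carrier G"
  shows "y \<in> conjugate G g X \<longleftrightarrow> g \<otimes> y \<otimes> inv g \<in> X"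
proof
  assume "y \<in> conjugate G g X"
  then show "g \<otimes> y \<otimes> inv g \<in> X"
    using assms unfolding conjugate_def by (auto simp: m_assoc subsetD)
next
  assume "g \<otimes> y \<otimes> inv g \<in> X"
  moreover have "y = inv g \<otimes> (g \<otimes> y \<otimes> inv g) \<otimes> g" using assms by (simp add: m_assoc)
  ultimately show "y \<in> conjugate G g X" unfolding conjugate_def by blast
qed

lemma conjugate_mult:
  "X \<subseteq> carrier G \<Longrightarrow> g \<in> carrier G \<Longrightarrow> h \<in> carrier G \<Longrightarrow>
    conjugate G (g \<otimes> h) X = conjugate G h (conjugate G g X)"
  unfolding conjugate_def image_image
  by (intro image_cong refl) (auto simp: inv_mult_group m_assoc subsetD)

lemma conjugate_one: "X \<subseteq> carrier G \<Longrightarrow> conjugate G \<one> X = X"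
  unfolding conjugate_def by (auto simp: subsetD)

lemma conjugate_inv_conjugate:
  "X \<subseteq> carrier G \<Longrightarrow> g \<in> carrier G \<Longrightarrow> conjugate G (inv g) (conjugate G g X) = X"
  using conjugate_mult[of X g "inv g"] conjugate_one[of X] by simp

lemma conjugate_conjugate_inv:
  "X \<subseteq> carrier G \<Longrightarrow> g \<in> carrier G \<Longrightarrow> conjugate G g (conjugate G (inv g) X) = X"
  using conjugate_inv_conjugate[of X "inv g"] by simp

lemma conjugate_mono: "X \<subseteq> Y \<Longrightarrow> conjugate G g X \<subseteq> conjugate G g Y"
  unfolding conjugate_def by auto

lemma subset_conjugate_iff:
  assumes "X \<subseteq> carrier G" and "Y \<subseteq> carrier G" and "g \<in> carrier G"
  shows "X \<subseteq> conjugate G g Y \<longleftrightarrow> conjugate G (inv g) X \<subseteq> Y"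
  using conjugate_mono[of X "conjugate G g Y" "inv g"] conjugate_mono[of "conjugate G (inv g) X" Y g]
    conjugate_inv_conjugate[OF assms(2,3)] conjugate_conjugate_inv[OF assms(1,3)]
  by auto

lemma conjugate_eq_one_iff:
  assumes "X \<subseteq> carrier G" and "g \<in> carrier G"
  shows "conjugate G g X = {\<one>} \<longleftrightarrow> X = {\<one>}"
proof
  assume "conjugate G g X = {\<one>}"
  then have "conjugate G (inv g) (conjugate G g X) = {\<one>}"
    using assms(2) by (simp add: conjugate_def)
  then show "X = {\<one>}" using conjugate_inv_conjugate[OF assms] by simp
qed (use assms(2) in \<open>simp add: conjugate_def\<close>)

lemma subgroup_conjugate:
  assumes "subgroup H G" and g: "g \<in> carrier G"
  shows "subgroup (conjugate G g H) G"
proof -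
  interpret H: subgroup H G by fact
  have mem: "y \<in> conjugate G g H \<longleftrightarrow> y \<in> carrier G \<and> g \<otimes> y \<otimes> inv g \<in> H" for y
    using mem_conjugate_iff[OF H.subset g] conjugate_subset_carrier[OF H.subset g] by blast
  show ?thesis
  proof
    show "conjugate G g H \<subseteq> carrier G" using conjugate_subset_carrier[OF H.subset g] .
    show "\<one> \<in> conjugate G g H" using g by (simp add: mem)
  next
    fix x y assume "x \<in> conjugate G g H" "y \<in> conjugate G g H"
    moreover have "g \<otimes> (x \<otimes> y) \<otimes> inv g = (g \<otimes> x \<otimes> inv g) \<otimes> (g \<otimes> y \<otimes> inv g)"
      if "x \<in> carrier G" "y \<in> carrier G" using that g by (simp add: m_assoc)
    ultimately show "x \<otimes> y \<in> conjugate G g H" by (simp add: mem)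
  next
    fix x assume "x \<in> conjugate G g H"
    moreover have "g \<otimes> inv x \<otimes> inv g = inv (g \<otimes> x \<otimes> inv g)" if "x \<in> carrier G"
      using that g by (simp add: inv_mult_group m_assoc)
    ultimately show "inv x \<in> conjugate G g H" by (simp add: mem)
  qed
qed

lemma transporter_eq: "transporter G H K = {g \<in> carrier G. conjugate G g H \<subseteq> K}"
  unfolding transporter_def conjugate_def by auto

lemma subgroup_centralizer:
  assumes "H \<subseteq> carrier G"
  shows "subgroup (centralizer_of G H) G"
proof
  show "centralizer_of G H \<subseteq> carrier G" "\<one> \<in> centralizer_of G H"
    using assms unfolding centralizer_of_def by auto
next
  fix x y assume "x \<in> centralizer_of G H" "y \<in> centralizer_of G H"
  moreover have "x \<otimes> y \<otimes> h = h \<otimes> (x \<otimes> y)"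
    if "x \<in> carrier G" "y \<in> carrier G" "h \<in> carrier G" "x \<otimes> h = h \<otimes> x" "y \<otimes> h = h \<otimes> y" for h
  proof -
    have "x \<otimes> y \<otimes> h = x \<otimes> (h \<otimes> y)" using that by (simp add: m_assoc)
    also have "\<dots> = h \<otimes> (x \<otimes> y)" using that by (simp add: m_assoc[symmetric])
    finally show ?thesis .
  qed
  ultimately show "x \<otimes> y \<in> centralizer_of G H"
    using assms unfolding centralizer_of_def by (auto simp: subsetD)
next
  fix x assume x: "x \<in> centralizer_of G H"
  have "inv x \<otimes> h = h \<otimes> inv x" if "h \<in> H" for h
  proof -
    have xh: "x \<in> carrier G" "h \<in> carrier G" "x \<otimes> h = h \<otimes> x"
      using x that assms unfolding centralizer_of_def by auto
    then have "inv x \<otimes> h \<otimes> x \<otimes> inv x = h \<otimes> inv x"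
      using conj_eq_self_iff_commute[of h x] by simp
    then show ?thesis using xh by (simp add: m_assoc)
  qed
  then show "inv x \<in> centralizer_of G H" using x unfolding centralizer_of_def by auto
qed

lemma centralizer_conjugate:
  assumes H: "H \<subseteq> carrier G" and g: "g \<in> carrier G"
  shows "centralizer_of G (conjugate G g H) = conjugate G g (centralizer_of G H)"
proof (rule Set.set_eqI)
  fix y
  have C: "centralizer_of G H \<subseteq> carrier G" unfolding centralizer_of_def by auto
  show "y \<in> centralizer_of G (conjugate G g H) \<longleftrightarrow> y \<in> conjugate G g (centralizer_of G H)"
  proof (cases "y \<in> carrier G")
    case True
    then show ?thesis
      using mem_conjugate_iff[OF C g True] conj_commute_iff[OF True _ g] H g
      unfolding centralizer_of_def conjugate_def by (auto simp: subsetD)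
  next
    case False
    then show ?thesis
      using conjugate_subset_carrier[OF C g] unfolding centralizer_of_def by auto
  qed
qed

lemma card_centralizer_conjugate:
  assumes "H \<subseteq> carrier G" and "g \<in> carrier G"
  shows "card (centralizer_of G (conjugate G g H)) = card (centralizer_of G H)"
  using centralizer_conjugate[OF assms] card_conjugate[OF _ assms(2), of "centralizer_of G H"]
  unfolding centralizer_of_def by auto

lemma conjugate_by_centralizer:
  assumes "L \<subseteq> carrier G" and "d \<in> centralizer_of G L"
  shows "conjugate G d L = L"
proof -
  have "inv d \<otimes> l \<otimes> d = l" if "l \<in> L" for l
    using assms that conj_eq_self_iff_commute[of l d] unfolding centralizer_of_def by auto
  then show ?thesis unfolding conjugate_def by (auto simp: image_iff)
qed

lemma rcos_eq_rcos_iff: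
  assumes "subgroup C G" and "x \<in> carrier G" and "y \<in> carrier G"
  shows "C #> y = C #> x \<longleftrightarrow> y \<otimes> inv x \<in> C"
  using subgroup.rcos_module[OF assms(1) is_group assms(2,3)] repr_independence[OF _ assms(2,1)]
    rcos_self[OF assms(3,1)] by auto

lemma card_eq_card_subgroup_mult_card_image:
  assumes C: "subgroup C G" and T: "finite T" "T \<subseteq> carrier G"
    and closed: "\<And>c g. c \<in> C \<Longrightarrow> g \<in> T \<Longrightarrow> c \<otimes> g \<in> T"
    and fibres: "\<And>x y. x \<in> T \<Longrightarrow> y \<in> T \<Longrightarrow> f y = f x \<longleftrightarrow> y \<otimes> inv x \<in> C"
  shows "card T = card C * card (f ` T)"
proof (rule card_eq_mult_card_image[OF T(1)])
  fix x assume x: "x \<in> T"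
  then have xc: "x \<in> carrier G" using T(2) by blast
  have "{y \<in> T. f y = f x} = C #> x"
  proof (intro equalityI subsetI)
    fix y assume "y \<in> {y \<in> T. f y = f x}"
    then show "y \<in> C #> x"
      using fibres[OF x] subgroup.rcos_module[OF C is_group xc] T(2) by blast
  next
    fix y assume y: "y \<in> C #> x"
    then have "y \<in> T" using closed x unfolding r_coset_def by auto
    then show "y \<in> {y \<in> T. f y = f x}"
      using y fibres[OF x] subgroup.rcos_module[OF C is_group xc] T(2) by blast
  qed
  then show "card {y \<in> T. f y = f x} = card C"
    using card_rcosets_equal[OF rcosetsI[OF subgroup.subset[OF C] xc] subgroup.subset[OF C]] by simp
qed

lemma card_frob_hom:
  assumes "finite (carrier G)" and H: "H \<subseteq> carrier G"
  shows "card (centralizer_of G H) * card (frob_hom G H K) = card (transporter G H K)"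
proof -
  let ?C = "centralizer_of G H"
  have C: "subgroup ?C G" using subgroup_centralizer[OF H] .
  have T: "transporter G H K \<subseteq> carrier G" unfolding transporter_def by auto
  have "card (transporter G H K) = card ?C * card ((\<lambda>g. ?C #> g) ` transporter G H K)"
  proof (rule card_eq_card_subgroup_mult_card_image[OF C finite_subset[OF T assms(1)] T])
    fix c g assume "c \<in> ?C" "g \<in> transporter G H K"
    moreover have "c \<in> carrier G" "g \<in> carrier G"
      using calculation T subgroup.subset[OF C] by auto
    ultimately show "c \<otimes> g \<in> transporter G H K"
      using conjugate_mult[OF H] conjugate_by_centralizer[OF H] by (simp add: transporter_eq)
  next
    fix x y assume "x \<in> transporter G H K" "y \<in> transporter G H K"
    then show "?C #> y = ?C #> x \<longleftrightarrow> y \<otimes> inv x \<in> ?C"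
      using rcos_eq_rcos_iff[OF C] T by blast
  qed
  then show ?thesis unfolding frob_hom_def by simp
qed

lemma rcos_mult_in_rcosets:
  assumes Q: "subgroup Q G" and X: "X \<in> rcosets Q" and a: "a \<in> carrier G"
  shows "X #> a \<in> rcosets Q"
proof -
  have Qs: "Q \<subseteq> carrier G" using subgroup.subset[OF Q] .
  obtain b where b: "b \<in> carrier G" "X = Q #> b" using X unfolding RCOSETS_def by blast
  then have "X #> a = Q #> (b \<otimes> a)" using a Qs by (simp add: coset_mult_assoc)
  then show ?thesis using b a rcosetsI[OF Qs] by simp
qed

lemma restrict_rcos_mult_in_Bij:
  assumes Q: "subgroup Q G" and g: "g \<in> carrier G"
  shows "(\<lambda>X\<in>rcosets Q. X #> g) \<in> Bij (rcosets Q)"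
proof -
  have sub: "X \<subseteq> carrier G" if "X \<in> rcosets Q" for X
    using that subgroup.rcosets_carrier[OF Q is_group] by blast
  have "bij_betw (\<lambda>X. X #> g) (rcosets Q) (rcosets Q)"
  proof (rule bij_betw_byWitness[where f' = "\<lambda>X. X #> inv g"])
    show "\<forall>X\<in>rcosets Q. X #> g #> inv g = X" "\<forall>X\<in>rcosets Q. X #> inv g #> g = X"
      using g sub by (simp_all add: coset_mult_assoc)
    show "(\<lambda>X. X #> g) ` (rcosets Q) \<subseteq> rcosets Q" "(\<lambda>X. X #> inv g) ` (rcosets Q) \<subseteq> rcosets Q"
      using rcos_mult_in_rcosets[OF Q] g by auto
  qed
  moreover have "bij_betw (\<lambda>X\<in>rcosets Q. X #> g) (rcosets Q) (rcosets Q)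
      = bij_betw (\<lambda>X. X #> g) (rcosets Q) (rcosets Q)"
    by (rule bij_betw_cong) simp
  ultimately show ?thesis unfolding Bij_def by simp
qed

lemma rcosets_action:
  assumes Q: "subgroup Q G"
  shows "group_action G (rcosets Q) (\<lambda>g. \<lambda>X\<in>rcosets Q. X #> inv g)"
  unfolding group_action_def group_hom_def group_hom_axioms_def
proof (intro conjI)
  show "group G" "group (BijGroup (rcosets Q))" by (rule is_group, rule group_BijGroup)
  have bij: "(\<lambda>X\<in>rcosets Q. X #> inv g) \<in> Bij (rcosets Q)" if "g \<in> carrier G" for g
    using restrict_rcos_mult_in_Bij[OF Q inv_closed[OF that]] .
  show "(\<lambda>g. \<lambda>X\<in>rcosets Q. X #> inv g) \<in> hom G (BijGroup (rcosets Q))"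
    unfolding hom_def
  proof (intro CollectI conjI ballI)
    show "(\<lambda>g. \<lambda>X\<in>rcosets Q. X #> inv g) \<in> carrier G \<rightarrow> carrier (BijGroup (rcosets Q))"
      using bij by (auto simp: BijGroup_def)
    fix x y assume x: "x \<in> carrier G" and y: "y \<in> carrier G"
    have "(\<lambda>X\<in>rcosets Q. X #> inv (x \<otimes> y))
        = compose (rcosets Q) (\<lambda>X\<in>rcosets Q. X #> inv x) (\<lambda>X\<in>rcosets Q. X #> inv y)"
      unfolding compose_def
    proof (rule restrict_ext)
      fix X assume X: "X \<in> rcosets Q"
      then have "X #> inv (x \<otimes> y) = X #> inv y #> inv x"
        using x y subgroup.rcosets_carrier[OF Q is_group] by (simp add: coset_mult_assoc inv_mult_group)
      then show "X #> inv (x \<otimes> y) = (\<lambda>X\<in>rcosets Q. X #> inv x) ((\<lambda>X\<in>rcosets Q. X #> inv y) X)"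
        using X rcos_mult_in_rcosets[OF Q X inv_closed[OF y]] by simp
    qed
    then show "(\<lambda>X\<in>rcosets Q. X #> inv (x \<otimes> y)) =
      (\<lambda>X\<in>rcosets Q. X #> inv x) \<otimes>\<^bsub>BijGroup (rcosets Q)\<^esub> (\<lambda>X\<in>rcosets Q. X #> inv y)"
      using bij[OF x] bij[OF y] by (simp add: BijGroup_def)
  qed
qed

lemma card_double_coset_stabilizer:
  assumes A: "subgroup A G" and B: "subgroup B G" and g: "g \<in> carrier G"
  shows "card {x \<in> A \<times> B. fst x \<otimes> g \<otimes> snd x = g} = card (A \<inter> conjugate G (inv g) B)"
proof (rule bij_betw_same_card[of fst],
       rule bij_betw_byWitness[where f' = "\<lambda>a. (a, inv g \<otimes> inv a \<otimes> g)"])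
  have As: "A \<subseteq> carrier G" and Bs: "B \<subseteq> carrier G" using A B subgroup.subset by auto
  have mem: "a \<in> conjugate G (inv g) B \<longleftrightarrow> inv g \<otimes> a \<otimes> g \<in> B" if "a \<in> A" for a
    using mem_conjugate_iff[OF Bs inv_closed[OF g]] that As g by auto
  have snd_eq: "b = inv g \<otimes> inv a \<otimes> g" if "a \<in> carrier G" "b \<in> carrier G" "a \<otimes> g \<otimes> b = g" for a b
  proof -
    have "b = inv g \<otimes> inv a \<otimes> (a \<otimes> g \<otimes> b)" using that(1,2) g by (simp add: m_assoc)
    also have "\<dots> = inv g \<otimes> inv a \<otimes> g" by (simp only: that(3))
    finally show ?thesis .
  qed
  show "\<forall>x\<in>{x \<in> A \<times> B. fst x \<otimes> g \<otimes> snd x = g}. (fst x, inv g \<otimes> inv (fst x) \<otimes> g) = x"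
    using snd_eq As Bs by (auto simp: subsetD)
  show "\<forall>a\<in>A \<inter> conjugate G (inv g) B. fst (a, inv g \<otimes> inv a \<otimes> g) = a" by simp
  show "fst ` {x \<in> A \<times> B. fst x \<otimes> g \<otimes> snd x = g} \<subseteq> A \<inter> conjugate G (inv g) B"
  proof (rule image_subsetI)
    fix x assume x: "x \<in> {x \<in> A \<times> B. fst x \<otimes> g \<otimes> snd x = g}"
    then have c: "fst x \<in> carrier G" "snd x \<in> carrier G" using As Bs by auto
    then have "inv g \<otimes> fst x \<otimes> g = inv (snd x)"
      using snd_eq[OF c] x g by (simp add: inv_mult_group m_assoc)
    then show "fst x \<in> A \<inter> conjugate G (inv g) B"
      using mem x B by (auto simp: subgroup.m_inv_closed)
  qed
  show "(\<lambda>a. (a, inv g \<otimes> inv a \<otimes> g)) ` (A \<inter> conjugate G (inv g) B)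
      \<subseteq> {x \<in> A \<times> B. fst x \<otimes> g \<otimes> snd x = g}"
  proof (rule image_subsetI)
    fix a assume a: "a \<in> A \<inter> conjugate G (inv g) B"
    then have ac: "a \<in> carrier G" using As by auto
    have "inv g \<otimes> a \<otimes> g \<in> B" using a mem by blast
    then have "inv (inv g \<otimes> a \<otimes> g) \<in> B" using B by (simp add: subgroup.m_inv_closed)
    moreover have "inv (inv g \<otimes> a \<otimes> g) = inv g \<otimes> inv a \<otimes> g"
      using ac g by (simp add: inv_mult_group m_assoc)
    moreover have "a \<otimes> g \<otimes> (inv g \<otimes> inv a \<otimes> g) = g" using ac g by (simp add: m_assoc)
    ultimately show "(a, inv g \<otimes> inv a \<otimes> g) \<in> {x \<in> A \<times> B. fst x \<otimes> g \<otimes> snd x = g}"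
      using a by simp
  qed
qed

lemma card_double_coset_fibre:
  assumes A: "subgroup A G" and B: "subgroup B G"
    and a1: "a1 \<in> A" and b1: "b1 \<in> B" and g0: "g0 \<in> carrier G"
  shows "card {x \<in> A \<times> B. fst x \<otimes> g0 \<otimes> snd x = a1 \<otimes> g0 \<otimes> b1}
    = card (A \<inter> conjugate G (inv (a1 \<otimes> g0 \<otimes> b1)) B)"
proof -
  define g where "g = a1 \<otimes> g0 \<otimes> b1"
  have As: "A \<subseteq> carrier G" and Bs: "B \<subseteq> carrier G" using A B subgroup.subset by auto
  have c: "a1 \<in> carrier G" "b1 \<in> carrier G" "g \<in> carrier G" using a1 b1 As Bs g0 by (auto simp: g_def)
  have eq_iff: "a \<otimes> g0 \<otimes> b = g \<longleftrightarrow> (a \<otimes> inv a1) \<otimes> g \<otimes> (inv b1 \<otimes> b) = g"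
    if "a \<in> carrier G" "b \<in> carrier G" for a b
    using that c g0 by (simp add: g_def m_assoc)
  have "card {x \<in> A \<times> B. fst x \<otimes> g0 \<otimes> snd x = g} = card {x \<in> A \<times> B. fst x \<otimes> g \<otimes> snd x = g}"
  proof (rule bij_betw_same_card[of "\<lambda>x. (fst x \<otimes> inv a1, inv b1 \<otimes> snd x)"],
         rule bij_betw_byWitness[where f' = "\<lambda>x. (fst x \<otimes> a1, b1 \<otimes> snd x)"])
    show "(\<lambda>x. (fst x \<otimes> inv a1, inv b1 \<otimes> snd x)) ` {x \<in> A \<times> B. fst x \<otimes> g0 \<otimes> snd x = g}
        \<subseteq> {x \<in> A \<times> B. fst x \<otimes> g \<otimes> snd x = g}"
    proof (rule image_subsetI)
      fix x assume x: "x \<in> {x \<in> A \<times> B. fst x \<otimes> g0 \<otimes> snd x = g}"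
      then have "fst x \<in> carrier G" "snd x \<in> carrier G" using As Bs by auto
      then show "(fst x \<otimes> inv a1, inv b1 \<otimes> snd x) \<in> {x \<in> A \<times> B. fst x \<otimes> g \<otimes> snd x = g}"
        using x eq_iff a1 b1 A B by (auto simp: subgroup.m_closed subgroup.m_inv_closed)
    qed
    show "(\<lambda>x. (fst x \<otimes> a1, b1 \<otimes> snd x)) ` {x \<in> A \<times> B. fst x \<otimes> g \<otimes> snd x = g}
        \<subseteq> {x \<in> A \<times> B. fst x \<otimes> g0 \<otimes> snd x = g}"
    proof (rule image_subsetI)
      fix x assume x: "x \<in> {x \<in> A \<times> B. fst x \<otimes> g \<otimes> snd x = g}"
      then have "fst x \<in> carrier G" "snd x \<in> carrier G" using As Bs by auto
      then have "fst x \<otimes> a1 \<otimes> g0 \<otimes> (b1 \<otimes> snd x) = g"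
        using x eq_iff[of "fst x \<otimes> a1" "b1 \<otimes> snd x"] c by (simp add: m_assoc)
      then show "(fst x \<otimes> a1, b1 \<otimes> snd x) \<in> {x \<in> A \<times> B. fst x \<otimes> g0 \<otimes> snd x = g}"
        using x a1 b1 A B by (auto simp: subgroup.m_closed)
    qed
  qed (use As Bs c in \<open>auto simp: subsetD m_assoc\<close>)
  then show ?thesis
    using card_double_coset_stabilizer[OF A B c(3)] by (simp add: g_def)
qed

lemma card_subgroup_dvd:
  assumes "subgroup H G" and "subgroup K G" and "H \<subseteq> K"
  shows "card H dvd card K"
proof -
  interpret K: group "G\<lparr>carrier := K\<rparr>" using subgroup.subgroup_is_group[OF assms(2) is_group] .
  have "card (rcosets\<^bsub>G\<lparr>carrier := K\<rparr>\<^esub> H) * card H = card K"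
    using K.lagrange[OF subgroup_incl[OF assms]] by (simp add: order_def)
  then show ?thesis by (metis dvd_triv_right)
qed

lemma sylow_subgroup_conjugate:
  assumes "sylow_subgroup G p Q" and "g \<in> carrier G"
  shows "sylow_subgroup G p (conjugate G g Q)"
  using assms subgroup_conjugate card_conjugate[OF subgroup.subset]
  unfolding sylow_subgroup_def p_subgroup_def by metis

lemma sylow_subgroup_of_subgroup:
  assumes sylow: "sylow_subgroup G p Q" and K: "subgroup K G" and "Q \<subseteq> K"
  shows "sylow_subgroup (G\<lparr>carrier := K\<rparr>) p Q"
proof -
  obtain a where Q: "subgroup Q G" "card Q = p ^ a" and index: "\<not> p dvd (order G div card Q)"
    using sylow unfolding sylow_subgroup_def p_subgroup_def by blast
  obtain i where i: "card K = card Q * i" using card_subgroup_dvd[OF Q(1) K \<open>Q \<subseteq> K\<close>] by blast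
  obtain j where j: "order G = card K * j"
    using lagrange[OF K] by (metis mult.commute)
  have "card Q > 0" using index by (cases "card Q") auto
  then have "order G div card Q = i * j" and "order (G\<lparr>carrier := K\<rparr>) div card Q = i"
    using i j by (simp_all add: order_def mult.assoc)
  then show ?thesis
    using Q index subgroup_incl[OF Q(1) K \<open>Q \<subseteq> K\<close>]
    unfolding sylow_subgroup_def p_subgroup_def by auto
qed

lemma conjugate_in_subgroup:
  "subgroup H G \<Longrightarrow> x \<in> H \<Longrightarrow> conjugate (G\<lparr>carrier := H\<rparr>) x X = conjugate G x X"
  by (simp add: conjugate_def m_inv_consistent)

lemma conjugate_mult_inv_eq:
  assumes "X \<subseteq> carrier G" "g \<in> carrier G" "h \<in> carrier G" and "conjugate G g X = conjugate G h X"
  shows "conjugate G (h \<otimes> inv g) X = X"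
  using conjugate_mult[OF assms(1,3) inv_closed[OF assms(2)]] assms(4)[symmetric]
    conjugate_inv_conjugate[OF assms(1,2)] by simp

lemma subset_centralizer_singleton_iff:
  "X \<subseteq> carrier G \<Longrightarrow> m \<in> carrier G \<Longrightarrow> X \<subseteq> centralizer_of G {m} \<longleftrightarrow> m \<in> centralizer_of G X"
  unfolding centralizer_of_def by auto

lemma p_subgroup_conjugate_into_sylow:
  assumes "finite (carrier G)" and p: "prime p"
    and "sylow_subgroup G p Q" and "p_subgroup G p R"
  shows "\<exists>x\<in>carrier G. R \<subseteq> conjugate G x Q"
proof -
  obtain a b where Q: "subgroup Q G" "card Q = p ^ a" "\<not> p dvd (order G div card Q)"
    and R: "subgroup R G" "card R = p ^ b"
    using assms(3,4) unfolding sylow_subgroup_def p_subgroup_def by blast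
  interpret A: group_action "G\<lparr>carrier := R\<rparr>" "rcosets Q" "\<lambda>g. \<lambda>X\<in>rcosets Q. X #> inv g"
    using group_action.induced_action[OF rcosets_action[OF Q(1)] R(1)] .
  have Qs: "Q \<subseteq> carrier G" and Rs: "R \<subseteq> carrier G" using Q(1) R(1) subgroup.subset by auto
  have "finite (rcosets Q)"
    using assms(1) rcosets_subset_PowG[OF Q(1)] by (meson finite_Pow_iff finite_subset)
  moreover have "card (rcosets Q) = order G div card Q"
    using lagrange[OF Q(1)] Q(2) p by (metis nonzero_mult_div_cancel_right power_not_zero not_prime_0)
  ultimately obtain X where X: "X \<in> rcosets Q" and fixed: "\<forall>r\<in>R. X #> inv r = X"
    using A.ex_fixed_point_if_prime_power_order[OF _ p, of b] Q(3) R(2) by (auto simp: order_def)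
  obtain x where x: "x \<in> carrier G" "X = Q #> x" using X unfolding RCOSETS_def by blast
  have "x \<otimes> r \<otimes> inv x \<in> Q" if r: "r \<in> R" for r
  proof -
    have rc: "r \<in> carrier G" using r Rs by blast
    have "X #> r = X" using fixed subgroup.m_inv_closed[OF R(1) r] rc by fastforce
    then have "Q #> (x \<otimes> r) = Q #> x" using x rc Qs by (simp add: coset_mult_assoc)
    then have "Q #> (x \<otimes> r \<otimes> inv x) = Q"
      by (rule coset_mult_inv2[OF _ m_closed[OF x(1) rc] x(1) Qs])
    then show ?thesis using coset_join1[OF _ _ Q(1)] x(1) rc by blast
  qed
  then show ?thesis using x(1) mem_conjugate_iff[OF Qs x(1)] Rs by blast
qed

end

locale finite_group = group G for G (structure) +
  assumes finite_carrier: "finite (carrier G)"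
begin

lemma frob_objsD:
  assumes "H \<in> frob_objs G p"
  shows "subgroup H G" "H \<subseteq> carrier G" "finite H" "H \<noteq> {\<one>}" "\<exists>i. card H = p ^ i"
  using assms finite_subset[OF _ finite_carrier] subgroup.subset
  unfolding frob_objs_def p_subgroup_def by auto

lemma finite_frob_objs: "finite (frob_objs G p)"
  using finite_subset[of "frob_objs G p" "Pow (carrier G)"] frob_objsD(2) finite_carrier by blast

lemma conjugate_in_frob_objs:
  assumes H: "H \<in> frob_objs G p" and g: "g \<in> carrier G"
  shows "conjugate G g H \<in> frob_objs G p"
  using frob_objsD[OF H] subgroup_conjugate[OF _ g] card_conjugate[OF _ g] conjugate_eq_one_iff[OF _ g]
  unfolding frob_objs_def p_subgroup_def by simp

lemma card_centralizer_pos: "H \<subseteq> carrier G \<Longrightarrow> card (centralizer_of G H) > 0"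
  using subgroup.one_closed[OF subgroup_centralizer] finite_carrier
  by (auto simp: card_gt_0_iff centralizer_of_def)

lemma of_nat_card_frob_hom:
  assumes "H \<subseteq> carrier G"
  shows "(of_nat (card (frob_hom G H K)) :: rat)
    = of_nat (card (transporter G H K)) / of_nat (card (centralizer_of G H))"
  using card_frob_hom[OF finite_carrier assms, of K] card_centralizer_pos[OF assms]
  by (simp add: field_simps flip: of_nat_mult)

lemma sum_card_transporter_mult:
  fixes f :: "'a set \<Rightarrow> rat"
  shows "(\<Sum>K\<in>frob_objs G p. of_nat (card (transporter G H K)) * f K)
    = (\<Sum>g\<in>carrier G. \<Sum>K\<in>{K\<in>frob_objs G p. conjugate G g H \<subseteq> K}. f K)"
  unfolding transporter_eq by (rule sum_card_mult_eq_sum_sum[OF finite_carrier finite_frob_objs])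

lemma ex_coweighting: "\<exists>c. is_coweighting (frob_objs G p) (\<lambda>H K. card (frob_hom G H K)) c"
proof -
  let ?O = "frob_objs G p"
  obtain m :: "'a set \<Rightarrow> rat"
    where m: "\<forall>K\<in>?O. (\<Sum>H\<in>{H\<in>?O. H \<subseteq> K}. m H) = 1 / of_nat (card (carrier G))"
    using ex_sum_subsets_eq[OF finite_frob_objs, where f = "\<lambda>_. 1 / of_nat (card (carrier G))"]
      frob_objsD(3) by blast
  have "(\<Sum>H\<in>?O. of_nat (card (centralizer_of G H)) * m H * of_nat (card (frob_hom G H K))) = 1"
    if K: "K \<in> ?O" for K
  proof -
    have "(\<Sum>H\<in>?O. of_nat (card (centralizer_of G H)) * m H * of_nat (card (frob_hom G H K)))
        = (\<Sum>H\<in>?O. of_nat (card {g \<in> carrier G. conjugate G g H \<subseteq> K}) * m H)"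
    proof (rule sum.cong[OF refl])
      fix H assume "H \<in> ?O"
      then have H: "H \<subseteq> carrier G" using frob_objsD(2) by blast
      show "of_nat (card (centralizer_of G H)) * m H * of_nat (card (frob_hom G H K))
          = of_nat (card {g \<in> carrier G. conjugate G g H \<subseteq> K}) * m H"
        using of_nat_card_frob_hom[OF H, of K] card_centralizer_pos[OF H]
        by (simp add: transporter_eq field_simps)
    qed
    also have "\<dots> = (\<Sum>g\<in>carrier G. \<Sum>H\<in>{H\<in>?O. conjugate G g H \<subseteq> K}. m H)"
      by (rule sum_card_mult_eq_sum_sum[OF finite_carrier finite_frob_objs])
    also have "\<dots> = (\<Sum>g\<in>carrier G. \<Sum>H\<in>{H\<in>?O. H \<subseteq> conjugate G (inv g) K}. m H)"
      using subset_conjugate_iff[OF frob_objsD(2) frob_objsD(2)[OF K] inv_closed]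
      by (intro sum.cong refl arg_cong[where f = "\<lambda>A. sum m A"]) auto
    also have "\<dots> = (\<Sum>g\<in>carrier G. 1 / of_nat (card (carrier G)))"
      using m conjugate_in_frob_objs[OF K inv_closed] by (intro sum.cong) auto
    also have "\<dots> = 1" using finite_carrier by auto
    finally show ?thesis .
  qed
  then have "is_coweighting ?O (\<lambda>H K. card (frob_hom G H K))
      (\<lambda>H. of_nat (card (centralizer_of G H)) * m H)"
    unfolding is_coweighting_def by simp
  then show ?thesis by blast
qed

end

section \<open>The weighting\<close>

locale sylow_finite_group = finite_group +
  fixes p :: nat and P :: "'a set"
  assumes prime_p: "prime p" and sylow_P: "sylow_subgroup G p P"
begin

lemma subgroup_P: "subgroup P G"
  using sylow_P unfolding sylow_subgroup_def p_subgroup_def by blast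

lemma P_subset_carrier: "P \<subseteq> carrier G"
  using subgroup.subset[OF subgroup_P] .

lemma finite_P: "finite P"
  using finite_subset[OF P_subset_carrier finite_carrier] .

lemma mem_normalizer_iff: "n \<in> normalizer_of G P \<longleftrightarrow> n \<in> carrier G \<and> conjugate G n P \<subseteq> P"
  unfolding normalizer_of_def transporter_eq by simp

lemma normalizer_subset_carrier: "normalizer_of G P \<subseteq> carrier G"
  using mem_normalizer_iff by blast

lemma finite_normalizer: "finite (normalizer_of G P)"
  using finite_subset[OF normalizer_subset_carrier finite_carrier] .

lemma conjugate_normalizer: "n \<in> normalizer_of G P \<Longrightarrow> conjugate G n P = P"
  using card_subset_eq[OF finite_P] card_conjugate[OF P_subset_carrier] mem_normalizer_iff by blast

lemma subgroup_normalizer: "subgroup (normalizer_of G P) G"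
proof
  show "normalizer_of G P \<subseteq> carrier G" by (rule normalizer_subset_carrier)
  show "\<one> \<in> normalizer_of G P" using mem_normalizer_iff conjugate_one[OF P_subset_carrier] by simp
next
  fix x y assume x: "x \<in> normalizer_of G P" and y: "y \<in> normalizer_of G P"
  then have "x \<in> carrier G" "y \<in> carrier G" using normalizer_subset_carrier by auto
  moreover have "conjugate G (x \<otimes> y) P = P"
    using conjugate_mult[OF P_subset_carrier calculation] conjugate_normalizer[OF x]
      conjugate_normalizer[OF y] by simp
  ultimately show "x \<otimes> y \<in> normalizer_of G P" using mem_normalizer_iff by simp
next
  fix x assume x: "x \<in> normalizer_of G P"
  then have "x \<in> carrier G" using normalizer_subset_carrier by auto
  moreover have "conjugate G (inv x) P = P"
    using conjugate_inv_conjugate[OF P_subset_carrier calculation] conjugate_normalizer[OF x] by simp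
  ultimately show "inv x \<in> normalizer_of G P" using mem_normalizer_iff by simp
qed

lemma centralizer_subset_normalizer: "centralizer_of G P \<subseteq> normalizer_of G P"
  using conjugate_by_centralizer[OF P_subset_carrier] mem_normalizer_iff
  unfolding centralizer_of_def by auto

lemma p_subgroup_if_subset_conjugate:
  assumes "subgroup H G" and "g \<in> carrier G" and "H \<subseteq> conjugate G g P"
  shows "p_subgroup G p H"
proof -
  obtain a where "card P = p ^ a" using sylow_P unfolding sylow_subgroup_def p_subgroup_def by blast
  then have "card H dvd p ^ a"
    using card_subgroup_dvd[OF assms(1) subgroup_conjugate[OF subgroup_P assms(2)] assms(3)]
      card_conjugate[OF P_subset_carrier assms(2)] by simp
  then show ?thesis using assms(1) divides_primepow_nat[OF prime_p] unfolding p_subgroup_def by blast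
qed

definition fixed_conjugate :: "'a \<times> 'a \<Rightarrow> 'a set" where
  "fixed_conjugate x = conjugate G (fst x) (P \<inter> centralizer_of G {snd x})"

lemma fixed_conjugate_in_frob_objs_iff:
  assumes "fst x \<in> carrier G" and "snd x \<in> carrier G"
  shows "fixed_conjugate x \<in> frob_objs G p \<longleftrightarrow> P \<inter> centralizer_of G {snd x} \<noteq> {\<one>}"
proof -
  let ?C = "P \<inter> centralizer_of G {snd x}"
  have "subgroup ?C G"
    using subgroups_Inter_pair[OF subgroup_P subgroup_centralizer] assms(2) by simp
  then have "subgroup (fixed_conjugate x) G" and "fixed_conjugate x \<subseteq> conjugate G (fst x) P"
    unfolding fixed_conjugate_def using subgroup_conjugate assms(1) conjugate_mono by auto
  then show ?thesis
    using p_subgroup_if_subset_conjugate[OF _ assms(1)] conjugate_eq_one_iff[OF _ assms(1), of ?C]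
      P_subset_carrier
    unfolding frob_objs_def fixed_conjugate_def p_subgroup_def by auto
qed

definition induced_aut :: "'a \<Rightarrow> 'a \<Rightarrow> 'a" where
  "induced_aut g = (\<lambda>x\<in>P. inv g \<otimes> x \<otimes> g)"

lemma fixed_points_induced_aut:
  "m \<in> carrier G \<Longrightarrow> fixed_points P (induced_aut m) = P \<inter> centralizer_of G {m}"
  using P_subset_carrier conj_eq_self_iff_commute
  unfolding fixed_points_def induced_aut_def centralizer_of_def by auto

lemma induced_aut_eq_iff:
  assumes x: "x \<in> carrier G" and y: "y \<in> carrier G"
  shows "induced_aut y = induced_aut x \<longleftrightarrow> y \<otimes> inv x \<in> centralizer_of G P"
proof -
  define u where "u = y \<otimes> inv x"
  have u: "u \<in> carrier G" and y_eq: "y = u \<otimes> x" using x y by (simp_all add: u_def m_assoc)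
  have pointwise: "inv y \<otimes> z \<otimes> y = inv x \<otimes> z \<otimes> x \<longleftrightarrow> u \<otimes> z = z \<otimes> u"
    if z: "z \<in> carrier G" for z
  proof -
    have "inv y \<otimes> z \<otimes> y = inv x \<otimes> (inv u \<otimes> z \<otimes> u) \<otimes> x"
      using y_eq u x z by (simp add: inv_mult_group m_assoc)
    then have "inv y \<otimes> z \<otimes> y = inv x \<otimes> z \<otimes> x \<longleftrightarrow> inv u \<otimes> z \<otimes> u = z"
      using u x z by simp
    then show ?thesis using conj_eq_self_iff_commute[OF z u] by auto
  qed
  have "induced_aut y = induced_aut x \<longleftrightarrow> (\<forall>z\<in>P. inv y \<otimes> z \<otimes> y = inv x \<otimes> z \<otimes> x)"
  proof
    assume eq: "induced_aut y = induced_aut x"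
    show "\<forall>z\<in>P. inv y \<otimes> z \<otimes> y = inv x \<otimes> z \<otimes> x"
    proof
      fix z assume "z \<in> P"
      then show "inv y \<otimes> z \<otimes> y = inv x \<otimes> z \<otimes> x"
        using fun_cong[OF eq, of z] by (simp add: induced_aut_def)
    qed
  next
    assume "\<forall>z\<in>P. inv y \<otimes> z \<otimes> y = inv x \<otimes> z \<otimes> x"
    then show "induced_aut y = induced_aut x"
      unfolding induced_aut_def by (intro restrict_ext) simp
  qed
  also have "\<dots> \<longleftrightarrow> (\<forall>z\<in>P. u \<otimes> z = z \<otimes> u)"
    using pointwise P_subset_carrier by blast
  also have "\<dots> \<longleftrightarrow> u \<in> centralizer_of G P"
    using u unfolding centralizer_of_def by simp
  finally show ?thesis unfolding u_def .
qed

lemma card_normalizer_filter: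
  "card {m \<in> normalizer_of G P. Q (induced_aut m)}
     = card (centralizer_of G P) * card {\<phi> \<in> fusion_auts G P. Q \<phi>}"
proof -
  let ?T = "{m \<in> normalizer_of G P. Q (induced_aut m)}"
  have T: "?T \<subseteq> carrier G" using normalizer_subset_carrier by blast
  have C: "subgroup (centralizer_of G P) G" using subgroup_centralizer[OF P_subset_carrier] .
  have "card ?T = card (centralizer_of G P) * card (induced_aut ` ?T)"
  proof (rule card_eq_card_subgroup_mult_card_image[OF C finite_subset[OF _ finite_normalizer] T])
    fix c g assume c: "c \<in> centralizer_of G P" and g: "g \<in> ?T"
    have cg: "c \<in> carrier G" "g \<in> carrier G" using c g T subgroup.subset[OF C] by auto
    then have "induced_aut (c \<otimes> g) = induced_aut g"
      using induced_aut_eq_iff[of g "c \<otimes> g"] c by (simp add: m_assoc)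
    then show "c \<otimes> g \<in> ?T"
      using g c centralizer_subset_normalizer subgroup.m_closed[OF subgroup_normalizer] by auto
  next
    fix x y assume "x \<in> ?T" "y \<in> ?T"
    then show "induced_aut y = induced_aut x \<longleftrightarrow> y \<otimes> inv x \<in> centralizer_of G P"
      using induced_aut_eq_iff T by blast
  qed auto
  moreover have "induced_aut ` ?T = {\<phi> \<in> fusion_auts G P. Q \<phi>}"
    unfolding fusion_auts_def induced_aut_def by auto
  ultimately show ?thesis by simp
qed

lemma fusion_ratio_eq:
  "(of_nat (card {\<phi> \<in> fusion_auts G P. fixed_points P \<phi> \<noteq> {\<one>}}) / of_nat (card (fusion_auts G P)) :: rat)
   = of_nat (card {m \<in> normalizer_of G P. P \<inter> centralizer_of G {m} \<noteq> {\<one>}})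
     / of_nat (card (normalizer_of G P))"
proof -
  have "{m \<in> normalizer_of G P. P \<inter> centralizer_of G {m} \<noteq> {\<one>}}
      = {m \<in> normalizer_of G P. fixed_points P (induced_aut m) \<noteq> {\<one>}}"
    using fixed_points_induced_aut normalizer_subset_carrier by auto
  then show ?thesis
    using card_normalizer_filter[of "\<lambda>\<phi>. fixed_points P \<phi> \<noteq> {\<one>}"]
      card_normalizer_filter[of "\<lambda>_. True"] card_centralizer_pos[OF P_subset_carrier]
    by simp
qed

definition sylow_conjugators :: "'a set \<Rightarrow> 'a set" where
  "sylow_conjugators L = {g \<in> carrier G. L \<subseteq> conjugate G g P}"

lemma sylow_conjugators_nonempty:
  assumes "L \<in> frob_objs G p"
  shows "sylow_conjugators L \<noteq> {}"
  using p_subgroup_conjugate_into_sylow[OF finite_carrier prime_p sylow_P, of L] assms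
  unfolding sylow_conjugators_def frob_objs_def by blast

lemma mult_mem_sylow_conjugators:
  assumes L: "L \<subseteq> carrier G" and g0: "g0 \<in> sylow_conjugators L"
    and n: "n \<in> normalizer_of G P" and d: "d \<in> centralizer_of G L"
  shows "n \<otimes> g0 \<otimes> d \<in> sylow_conjugators L"
proof -
  have g0c: "g0 \<in> carrier G" and L_sub: "L \<subseteq> conjugate G g0 P"
    using g0 unfolding sylow_conjugators_def by auto
  have nc: "n \<in> carrier G" and dc: "d \<in> carrier G"
    using n d normalizer_subset_carrier unfolding centralizer_of_def by auto
  have "conjugate G (n \<otimes> g0 \<otimes> d) P = conjugate G d (conjugate G g0 P)"
    using conjugate_mult[OF P_subset_carrier] conjugate_normalizer[OF n] nc g0c dc by simp
  moreover have "L \<subseteq> conjugate G d (conjugate G g0 P)"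
    using conjugate_mono[OF L_sub, of d] conjugate_by_centralizer[OF L d] by simp
  ultimately show ?thesis using nc g0c dc unfolding sylow_conjugators_def by simp
qed

lemma subset_fixed_conjugate_iff:
  assumes L: "L \<subseteq> carrier G" and g: "g \<in> carrier G" and m: "m \<in> carrier G"
  shows "L \<subseteq> fixed_conjugate (g, m)
    \<longleftrightarrow> g \<in> sylow_conjugators L \<and> m \<in> centralizer_of G (conjugate G (inv g) L)"
proof -
  have Lg: "conjugate G (inv g) L \<subseteq> carrier G" using conjugate_subset_carrier[OF L inv_closed[OF g]] .
  have "L \<subseteq> fixed_conjugate (g, m)
      \<longleftrightarrow> conjugate G (inv g) L \<subseteq> P \<and> conjugate G (inv g) L \<subseteq> centralizer_of G {m}"
    using subset_conjugate_iff[OF L _ g, of "P \<inter> centralizer_of G {m}"] P_subset_carrier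
    unfolding fixed_conjugate_def by auto
  also have "\<dots> \<longleftrightarrow> g \<in> sylow_conjugators L \<and> m \<in> centralizer_of G (conjugate G (inv g) L)"
    using subset_conjugate_iff[OF L P_subset_carrier g] subset_centralizer_singleton_iff[OF Lg m] g
    unfolding sylow_conjugators_def by simp
  finally show ?thesis .
qed

definition weight :: "'a set \<Rightarrow> rat" where
  "weight K = of_nat (card {x \<in> carrier G \<times> normalizer_of G P. fixed_conjugate x = K})
     / of_nat (card (carrier G) * card (normalizer_of G P))"

lemma sum_weight:
  assumes "finite B"
  shows "(\<Sum>K\<in>B. weight K)
    = of_nat (card {x \<in> carrier G \<times> normalizer_of G P. fixed_conjugate x \<in> B})
      / of_nat (card (carrier G) * card (normalizer_of G P))"
  using sum_card_fibres[OF finite_cartesian_product[OF finite_carrier finite_normalizer] assms,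
      of fixed_conjugate]
  unfolding weight_def sum_divide_distrib[symmetric] of_nat_sum[symmetric] by simp

lemma sum_weight_frob_objs:
  "(\<Sum>K\<in>frob_objs G p. weight K)
    = of_nat (card {m \<in> normalizer_of G P. P \<inter> centralizer_of G {m} \<noteq> {\<one>}})
      / of_nat (card (normalizer_of G P))"
proof -
  have "{x \<in> carrier G \<times> normalizer_of G P. fixed_conjugate x \<in> frob_objs G p}
      = carrier G \<times> {m \<in> normalizer_of G P. P \<inter> centralizer_of G {m} \<noteq> {\<one>}}"
  proof (rule Set.set_eqI)
    fix x :: "'a \<times> 'a"
    show "x \<in> {x \<in> carrier G \<times> normalizer_of G P. fixed_conjugate x \<in> frob_objs G p}
      \<longleftrightarrow> x \<in> carrier G \<times> {m \<in> normalizer_of G P. P \<inter> centralizer_of G {m} \<noteq> {\<one>}}"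
    proof (cases "fst x \<in> carrier G \<and> snd x \<in> normalizer_of G P")
      case True
      then have "fixed_conjugate x \<in> frob_objs G p \<longleftrightarrow> P \<inter> centralizer_of G {snd x} \<noteq> {\<one>}"
        using fixed_conjugate_in_frob_objs_iff normalizer_subset_carrier by blast
      then show ?thesis using True by (simp add: mem_Times_iff)
    qed (auto simp: mem_Times_iff)
  qed
  then show ?thesis
    using sum_weight[OF finite_frob_objs] finite_carrier one_closed
    by (auto simp: card_cartesian_product)
qed

end

locale abelian_sylow = sylow_finite_group +
  assumes abelian_P: "abelian_set G P"
begin

lemma conjugate_P_subset_centralizer:
  assumes "g \<in> sylow_conjugators L"
  shows "conjugate G g P \<subseteq> centralizer_of G L"
proof
  fix x assume x: "x \<in> conjugate G g P"
  have g: "g \<in> carrier G" and L: "L \<subseteq> conjugate G g P"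
    using assms unfolding sylow_conjugators_def by auto
  have "x \<otimes> h = h \<otimes> x" if "h \<in> L" for h
  proof -
    obtain a b where ab: "a \<in> P" "b \<in> P" "x = inv g \<otimes> a \<otimes> g" "h = inv g \<otimes> b \<otimes> g"
      using x L \<open>h \<in> L\<close> unfolding conjugate_def by blast
    have "a \<otimes> b = b \<otimes> a" using abelian_P ab(1,2) unfolding abelian_set_def by blast
    moreover have "x \<otimes> h = inv g \<otimes> (a \<otimes> b) \<otimes> g" "h \<otimes> x = inv g \<otimes> (b \<otimes> a) \<otimes> g"
      using ab g P_subset_carrier by (simp_all add: m_assoc subsetD)
    ultimately show ?thesis by simp
  qed
  moreover have "x \<in> carrier G" using x conjugate_subset_carrier[OF P_subset_carrier g] by blast
  ultimately show "x \<in> centralizer_of G L" unfolding centralizer_of_def by blast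
qed

lemma sylow_conjugators_double_coset:
  assumes L: "L \<in> frob_objs G p"
    and g0: "g0 \<in> sylow_conjugators L" and g: "g \<in> sylow_conjugators L"
  shows "\<exists>n\<in>normalizer_of G P. \<exists>d\<in>centralizer_of G L. g = n \<otimes> g0 \<otimes> d"
proof -
  let ?C = "centralizer_of G L"
  let ?K = "G\<lparr>carrier := ?C\<rparr>"
  have C: "subgroup ?C G" using subgroup_centralizer[OF frob_objsD(2)[OF L]] .
  interpret K: group ?K using subgroup.subgroup_is_group[OF C is_group] .
  have finite_K: "finite (carrier ?K)" using finite_subset[OF subgroup.subset[OF C] finite_carrier] by simp
  have g0c: "g0 \<in> carrier G" and gc: "g \<in> carrier G"
    using g0 g unfolding sylow_conjugators_def by auto
  \<comment> \<open>Because \<open>P\<close> is abelian, both conjugates lie in \<open>C\<^sub>G(L)\<close>.\<close>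
  have sylow: "sylow_subgroup ?K p (conjugate G g0 P)"
    using sylow_subgroup_of_subgroup[OF sylow_subgroup_conjugate[OF sylow_P g0c] C
        conjugate_P_subset_centralizer[OF g0]] .
  have p_sub: "p_subgroup ?K p (conjugate G g P)"
    using sylow_subgroup_conjugate[OF sylow_P gc] subgroup_incl[OF _ C conjugate_P_subset_centralizer[OF g]]
    unfolding sylow_subgroup_def p_subgroup_def by blast
  obtain x where x: "x \<in> ?C"
    and "conjugate G g P \<subseteq> conjugate ?K x (conjugate G g0 P)"
    using K.p_subgroup_conjugate_into_sylow[OF finite_K prime_p sylow p_sub] by auto
  then have sub: "conjugate G g P \<subseteq> conjugate G x (conjugate G g0 P)"
    using conjugate_in_subgroup[OF C x] by simp
  have xc: "x \<in> carrier G" using x subgroup.subset[OF C] by blast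
  have "conjugate G g P = conjugate G (g0 \<otimes> x) P"
    using sub card_subset_eq[OF finite_subset[OF conjugate_subset_carrier finite_carrier]]
      conjugate_mult[OF P_subset_carrier g0c xc] card_conjugate P_subset_carrier
      conjugate_subset_carrier g0c xc gc
    by (metis m_closed)
  then have "conjugate G (g \<otimes> inv (g0 \<otimes> x)) P = P"
    using conjugate_mult_inv_eq[OF P_subset_carrier m_closed[OF g0c xc] gc] by simp
  then have "g \<otimes> inv (g0 \<otimes> x) \<in> normalizer_of G P"
    using mem_normalizer_iff g0c xc gc by simp
  moreover have "g = g \<otimes> inv (g0 \<otimes> x) \<otimes> g0 \<otimes> x"
    using g0c xc gc by (simp add: m_assoc inv_mult_group)
  ultimately show ?thesis using x by blast
qed

lemma card_pairs_containing:
  assumes L: "L \<in> frob_objs G p"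
  shows "card {x \<in> carrier G \<times> normalizer_of G P. L \<subseteq> fixed_conjugate x}
    = card (normalizer_of G P) * card (centralizer_of G L)"
proof -
  let ?N = "normalizer_of G P"
  let ?C = "centralizer_of G L"
  let ?T = "sylow_conjugators L"
  have Ls: "L \<subseteq> carrier G" using frob_objsD(2)[OF L] .
  have C: "subgroup ?C G" using subgroup_centralizer[OF Ls] .
  have finite_T: "finite ?T" using finite_carrier unfolding sylow_conjugators_def by simp
  have finite_NC: "finite (?N \<times> ?C)"
    using finite_normalizer finite_subset[OF subgroup.subset[OF C] finite_carrier] by simp
  obtain g0 where g0: "g0 \<in> ?T" using sylow_conjugators_nonempty[OF L] by blast
  have g0c: "g0 \<in> carrier G" using g0 unfolding sylow_conjugators_def by auto
  have "{x \<in> carrier G \<times> ?N. L \<subseteq> fixed_conjugate x}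
      = Sigma ?T (\<lambda>g. ?N \<inter> centralizer_of G (conjugate G (inv g) L))"
    using subset_fixed_conjugate_iff[OF Ls] normalizer_subset_carrier
    unfolding sylow_conjugators_def by auto
  then have "card {x \<in> carrier G \<times> ?N. L \<subseteq> fixed_conjugate x}
      = (\<Sum>g\<in>?T. card (?N \<inter> centralizer_of G (conjugate G (inv g) L)))"
    using finite_T finite_normalizer by (simp add: card_SigmaI)
  also have "\<dots> = (\<Sum>g\<in>?T. card {x \<in> ?N \<times> ?C. fst x \<otimes> g0 \<otimes> snd x = g})"
  proof (rule sum.cong[OF refl])
    fix g assume g: "g \<in> ?T"
    then obtain n d where n: "n \<in> ?N" and d: "d \<in> ?C" and g_eq: "g = n \<otimes> g0 \<otimes> d"
      using sylow_conjugators_double_coset[OF L g0] by blast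
    have "centralizer_of G (conjugate G (inv g) L) = conjugate G (inv g) ?C"
      using centralizer_conjugate[OF Ls] g unfolding sylow_conjugators_def by simp
    then show "card (?N \<inter> centralizer_of G (conjugate G (inv g) L))
        = card {x \<in> ?N \<times> ?C. fst x \<otimes> g0 \<otimes> snd x = g}"
      using card_double_coset_fibre[OF subgroup_normalizer C n d g0c] g_eq by simp
  qed
  also have "\<dots> = card {x \<in> ?N \<times> ?C. fst x \<otimes> g0 \<otimes> snd x \<in> ?T}"
    by (rule sum_card_fibres[OF finite_NC finite_T])
  also have "{x \<in> ?N \<times> ?C. fst x \<otimes> g0 \<otimes> snd x \<in> ?T} = ?N \<times> ?C"
    using mult_mem_sylow_conjugators[OF Ls g0] by auto
  finally show ?thesis by (simp add: card_cartesian_product)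
qed

lemma sum_weight_above:
  assumes L: "L \<in> frob_objs G p"
  shows "(\<Sum>K\<in>{K \<in> frob_objs G p. L \<subseteq> K}. weight K)
    = of_nat (card (centralizer_of G L)) / of_nat (card (carrier G))"
proof -
  let ?N = "normalizer_of G P"
  have "fixed_conjugate x \<in> frob_objs G p"
    if x: "x \<in> carrier G \<times> ?N" and sub: "L \<subseteq> fixed_conjugate x" for x
  proof -
    have c: "fst x \<in> carrier G" "snd x \<in> carrier G" using x normalizer_subset_carrier by auto
    have Y: "P \<inter> centralizer_of G {snd x} \<subseteq> carrier G" using P_subset_carrier by blast
    have "\<one> \<in> L" "L \<noteq> {\<one>}" using frob_objsD[OF L] subgroup.one_closed by auto
    then have "fixed_conjugate x \<noteq> {\<one>}" using sub by blast
    then have "P \<inter> centralizer_of G {snd x} \<noteq> {\<one>}"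
      using conjugate_eq_one_iff[OF Y c(1)] unfolding fixed_conjugate_def by blast
    then show ?thesis using fixed_conjugate_in_frob_objs_iff[OF c] by blast
  qed
  then have "{x \<in> carrier G \<times> ?N. fixed_conjugate x \<in> {K \<in> frob_objs G p. L \<subseteq> K}}
      = {x \<in> carrier G \<times> ?N. L \<subseteq> fixed_conjugate x}"
    by blast
  then have "(\<Sum>K\<in>{K \<in> frob_objs G p. L \<subseteq> K}. weight K)
      = of_nat (card ?N * card (centralizer_of G L)) / of_nat (card (carrier G) * card ?N)"
    using sum_weight[of "{K \<in> frob_objs G p. L \<subseteq> K}"] finite_frob_objs card_pairs_containing[OF L]
    by simp
  moreover have "card ?N \<noteq> 0"
    using finite_normalizer subgroup.one_closed[OF subgroup_normalizer] by auto
  ultimately show ?thesis by simp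
qed

lemma is_weighting_weight: "is_weighting (frob_objs G p) (\<lambda>H K. card (frob_hom G H K)) weight"
  unfolding is_weighting_def
proof
  fix H assume H: "H \<in> frob_objs G p"
  let ?c = "of_nat (card (centralizer_of G H)) :: rat"
  have Hs: "H \<subseteq> carrier G" using frob_objsD(2)[OF H] .
  have "(\<Sum>K\<in>frob_objs G p. of_nat (card (frob_hom G H K)) * weight K)
      = (\<Sum>K\<in>frob_objs G p. of_nat (card (transporter G H K)) * weight K) / ?c"
    unfolding of_nat_card_frob_hom[OF Hs] sum_divide_distrib by (simp add: field_simps)
  also have "\<dots> = (\<Sum>g\<in>carrier G. \<Sum>K\<in>{K \<in> frob_objs G p. conjugate G g H \<subseteq> K}. weight K) / ?c"
    unfolding sum_card_transporter_mult ..
  also have "\<dots> = (\<Sum>g\<in>carrier G. ?c / of_nat (card (carrier G))) / ?c"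
    using sum_weight_above[OF conjugate_in_frob_objs[OF H]] card_centralizer_conjugate[OF Hs]
    by simp
  also have "\<dots> = 1"
    using finite_carrier one_closed card_centralizer_pos[OF Hs] by auto
  finally show "(\<Sum>K\<in>frob_objs G p. of_nat (card (frob_hom G H K)) * weight K) = 1" .
qed

end

theorem corollary5p6:
  fixes G :: "('a, 'b) monoid_scheme" and p :: nat and P :: "'a set"
  assumes "group G" and "finite (carrier G)" and "prime p"
    and "sylow_subgroup G p P" and "abelian_set G P"
  shows "has_euler_char (frob_objs G p) (\<lambda>H K. card (frob_hom G H K))
           (of_nat (card {\<phi> \<in> fusion_auts G P. fixed_points P \<phi> \<noteq> {\<one>\<^bsub>G\<^esub>}})
            / of_nat (card (fusion_auts G P)))"
proof -
  interpret abelian_sylow G p P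
    using assms by (simp add: abelian_sylow_def abelian_sylow_axioms_def sylow_finite_group_def
        sylow_finite_group_axioms_def finite_group_def finite_group_axioms_def)
  obtain c where "is_coweighting (frob_objs G p) (\<lambda>H K. card (frob_hom G H K)) c"
    using ex_coweighting by blast
  then show ?thesis
    using has_euler_charI[OF is_weighting_weight] sum_weight_frob_objs fusion_ratio_eq by simp
qed

end
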